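(* Let $H$ be a finite abelian group of order $n$, and for $f:H\to\{0,1\}$ define the multispectrum $A_f:H^{n-1}\to\mathbb{Z}$ by $$A_f(\ell_1,\dots,\ell_{n-1})=\sum_{k\in H}f(k)f(k+\ell_1)\cdots f(k+\ell_1+\cdots+\ell_{n-1}).$$ If $f_1,f_2:H\to\{0,1\}$ satisfy $A_{f_1}=A_{f_2}$, then $f_1$ is a shift of $f_2$, i.e. there is $\ell\in H$ with $f_1(k)=f_2(k+\ell)$ for all $k\in H$. *)

theory Defs
  imports Main
begin

text \<open>An argument (l_1,...,l_{n-1}) \<in> H^{n-1} is a list ls of length n-1;
  the j-th factor (j = 0..n-1) is f(k + l_1 + ... + l_j) = f(k + sum_list (take j ls)).\<close>
definition multispectrum :: "('a::{finite,ab_group_add} \<Rightarrow> int) \<Rightarrow> 'a list \<Rightarrow> int" where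
  "multispectrum f ls = (\<Sum>k\<in>UNIV. \<Prod>j\<in>{0..length ls}. f (k + sum_list (take j ls)))"

end

theory Submission
  imports Defs
begin

text \<open>Evaluating the multispectrum at the zero list gives the size of the support of
  \<open>f\<close>, so \<open>f1\<close> and \<open>f2\<close> have supports of equal size. A walk of \<open>n - 1\<close>
  steps can visit every point of a nonempty set \<open>S\<close> without ever leaving \<open>S\<close>; for
  \<open>S\<close> the support of \<open>f1\<close>, the multispectrum of \<open>f1\<close> is positive at the step list
  of that walk. Hence so is that of \<open>f2\<close>, i.e. some translate of the walk lies in the
  support of \<open>f2\<close>. So a translate of the support of \<open>f1\<close> is contained in the
  support of \<open>f2\<close>, and equal sizes force equality.\<close>

lemma prod_01_eq:
  fixes h :: "'b \<Rightarrow> 'c::{comm_semiring_1, zero_neq_one}"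
  assumes "finite A" "\<And>j. j \<in> A \<Longrightarrow> h j \<in> {0, 1}"
  shows "prod h A = (if \<forall>j\<in>A. h j = 1 then 1 else 0)"
  using assms by (induction A rule: finite_induct) auto

lemma sum_list_take_differences:
  fixes g :: "nat \<Rightarrow> 'a::ab_group_add"
  assumes "j \<le> m"
  shows "sum_list (take j (map (\<lambda>i. g (Suc i) - g i) [0..<m])) = g j - g 0"
proof -
  have "take j (map (\<lambda>i. g (Suc i) - g i) [0..<m]) = map (\<lambda>i. g (Suc i) - g i) [0..<j]"
    using assms by (simp add: take_map)
  then show ?thesis
    by (simp add: sum_set_upt_conv_sum_list_nat[symmetric] atLeast0LessThan sum_lessThan_telescope)
qed

lemma walk_onto:
  fixes S :: "'a::{finite,ab_group_add} set"
  assumes "S \<noteq> {}"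
  obtains k ls where "length ls = card (UNIV :: 'a set) - 1"
    and "(\<lambda>j. k + sum_list (take j ls)) ` {0..length ls} = S"
proof -
  define n where "n = card (UNIV :: 'a set)"
  obtain s where s: "s \<in> S" using assms by blast
  obtain e where e: "bij_betw e {0..<n} (UNIV :: 'a set)"
    unfolding n_def using ex_bij_betw_nat_finite[of "UNIV :: 'a set"] by auto
  define g where "g j = (if e j \<in> S then e j else s)" for j
  define ls where "ls = map (\<lambda>i. g (Suc i) - g i) [0..<n - 1]"
  have len: "length ls = n - 1" by (simp add: ls_def)
  have "n > 0" by (simp add: n_def finite_UNIV_card_ge_0)
  then have dom: "{0..length ls} = {0..<n}" using len by auto
  have "(\<lambda>j. g 0 + sum_list (take j ls)) ` {0..length ls} = g ` {0..<n}"
    by (rule image_cong[OF dom]) (simp add: ls_def sum_list_take_differences)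
  also have "g ` {0..<n} = S"
  proof
    show "g ` {0..<n} \<subseteq> S" using s by (auto simp: g_def)
    show "S \<subseteq> g ` {0..<n}"
    proof
      fix x assume "x \<in> S"
      obtain j where "j < n" "e j = x"
        using e unfolding bij_betw_def by (metis UNIV_I atLeastLessThan_iff imageE)
      with \<open>x \<in> S\<close> show "x \<in> g ` {0..<n}" by (auto simp: g_def)
    qed
  qed
  finally show ?thesis using that len n_def by blast
qed

lemma multispectrum_pos_iff:
  fixes f :: "'a::{finite,ab_group_add} \<Rightarrow> int"
  assumes "\<And>k. f k \<in> {0, 1}"
  shows "multispectrum f ls > 0 \<longleftrightarrow> (\<exists>k. \<forall>j\<in>{0..length ls}. f (k + sum_list (take j ls)) = 1)"
proof -
  have term_01: "(\<Prod>j\<in>{0..length ls}. f (k + sum_list (take j ls))) =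
      (if \<forall>j\<in>{0..length ls}. f (k + sum_list (take j ls)) = 1 then 1 else 0)" for k
    by (rule prod_01_eq) (use assms in auto)
  show ?thesis
    unfolding multispectrum_def term_01
    by (auto simp: order_less_le sum_nonneg_eq_0_iff sum_nonneg)
qed

lemma multispectrum_replicate_zero:
  fixes f :: "'a::{finite,ab_group_add} \<Rightarrow> int"
  assumes "\<And>k. f k \<in> {0, 1}"
  shows "multispectrum f (replicate m 0) = sum f UNIV"
proof -
  have "(\<Prod>j\<in>{0..m}. f (k + sum_list (take j (replicate m 0)))) = f k" for k
  proof -
    have "sum_list (replicate i (0::'a)) = 0" for i by (induction i) auto
    then have "(\<Prod>j\<in>{0..m}. f (k + sum_list (take j (replicate m 0)))) = f k ^ Suc m"
      by (simp add: take_replicate)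
    also have "\<dots> = f k" using assms[of k] by auto
    finally show ?thesis .
  qed
  then show ?thesis unfolding multispectrum_def by simp
qed

lemma multispectrum_eq_imp_shift_le:
  fixes f1 f2 :: "'a::{finite,ab_group_add} \<Rightarrow> int"
  assumes f1: "\<And>k. f1 k \<in> {0, 1}"
      and f2: "\<And>k. f2 k \<in> {0, 1}"
      and eq: "\<And>ls. length ls = card (UNIV :: 'a set) - 1 \<Longrightarrow> multispectrum f1 ls = multispectrum f2 ls"
  obtains c where "\<And>x. f1 x \<le> f2 (x + c)"
proof (cases "\<exists>s. f1 s = 1")
  case False
  then have "f1 x \<le> f2 (x + 0)" for x using f1[of x] f2[of x] by auto
  then show ?thesis using that by blast
next
  case True
  then obtain k ls where len: "length ls = card (UNIV :: 'a set) - 1"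
    and walk: "(\<lambda>j. k + sum_list (take j ls)) ` {0..length ls} = {x. f1 x = 1}"
    using walk_onto[of "{x. f1 x = 1}"] by blast
  have "multispectrum f1 ls > 0"
    using walk by (auto simp: multispectrum_pos_iff[OF f1])
  then have "multispectrum f2 ls > 0" using eq[OF len] by simp
  then obtain k' where k': "\<forall>j\<in>{0..length ls}. f2 (k' + sum_list (take j ls)) = 1"
    by (auto simp: multispectrum_pos_iff[OF f2])
  have "f1 x \<le> f2 (x + (k' - k))" for x
  proof (cases "f1 x = 1")
    case True
    then obtain j where "j \<in> {0..length ls}" "x = k + sum_list (take j ls)"
      using walk by blast
    with k' have "f2 (x + (k' - k)) = 1" by (simp add: algebra_simps)
    with True show ?thesis by simp
  next
    case False
    then show ?thesis using f1[of x] f2[of "x + (k' - k)"] by auto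
  qed
  then show ?thesis using that by blast
qed

theorem lemma7:
  fixes f1 f2 :: "'a::{finite,ab_group_add} \<Rightarrow> int"
  assumes "\<And>k. f1 k \<in> {0, 1}"
      and "\<And>k. f2 k \<in> {0, 1}"
      and "\<And>ls. length ls = card (UNIV :: 'a set) - 1 \<Longrightarrow> multispectrum f1 ls = multispectrum f2 ls"
  shows "\<exists>l. \<forall>k. f1 k = f2 (k + l)"
proof -
  obtain c where le: "\<And>x. f1 x \<le> f2 (x + c)"
    using multispectrum_eq_imp_shift_le assms by blast
  have "sum f1 UNIV = sum f2 UNIV"
    using assms(3)[of "replicate (card (UNIV :: 'a set) - 1) 0"]
    by (simp add: multispectrum_replicate_zero[OF assms(1)] multispectrum_replicate_zero[OF assms(2)])
  also have "\<dots> = (\<Sum>x\<in>UNIV. f2 (x + c))"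
    by (rule sum.reindex_bij_witness[of _ "\<lambda>x. x + c" "\<lambda>x. x - c"]) auto
  finally have "f1 x = f2 (x + c)" for x
    by (rule sum_mono_inv) (use le in auto)
  then show ?thesis by blast
qed

end
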